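(* Let $\mathsf{X},\mathsf{Y}$ be Polish, $c$ measurable with $e^{-c}\in L^1(\mu\otimes\nu)$, and let $R$ be defined by $dR=\xi^{-1}e^{-c}d(\mu\otimes\nu)$ with $\xi=\int e^{-c}d(\mu\otimes\nu)$. Let $\mu,\mu'\in\mathcal{P}(\mathsf{X})$ with $H(\mu'|\mu)<\infty$, $\nu,\nu'\in\mathcal{P}(\mathsf{Y})$ with $H(\nu'|\nu)<\infty$, and measurable $f,f':\mathsf{X}\to\mathbb{R}$, $g,g':\mathsf{Y}\to\mathbb{R}$ with $$\tilde C_1:=\inf_{\alpha>0}\frac{2}{\alpha}\Big(\frac32+\log\int e^{\alpha|f'|}d\mu\Big)<\infty,\qquad \tilde C_2:=\inf_{\alpha>0}\frac{2}{\alpha}\Big(\frac32+\log\int e^{\alpha|g'|}d\nu\Big)<\infty.$$ Let $\pi\in\Pi(\mu,\nu)$ and $\pi'\in\Pi(\mu',\nu')$ satisfy $d\pi=e^{f\oplus g-c}d(\mu\otimes\nu)$ and $d\pi'=e^{f'\oplus g'-c}d(\mu\otimes\nu)$. Then $H(\pi'|R)<\infty$ and $$H(\pi|R)-H(\pi'|R)\le H(\pi|\pi')+\tilde C_1\Big(\sqrt{H(\mu'|\mu)}+\tfrac12H(\mu'|\mu)\Big)+\tilde C_2\Big(\sqrt{H(\nu'|\nu)}+\tfrac12H(\nu'|\nu)\Big).$$ If $\nu=\nu'$ and $(f,g)\in L^1(\mu)\times L^1(\nu)$, the requirement $\tilde C_2<\infty$ can be dropped.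
   Context: Relative entropy: $H(\rho|\sigma)=\int\log\frac{d\rho}{d\sigma}d\rho$ if $\rho\ll\sigma$, $+\infty$ otherwise. $\Pi(\mu,\nu)$: couplings of $\mu$ and $\nu$. $(f\oplus g)(x,y)=f(x)+g(y)$. *)

theory Defs
  imports "HOL-Probability.Probability"
begin

text \<open>For probability measures the
negative part of log(d rho/d sigma) is always rho-integrable, so the integral is
+infinity exactly when the log-density is not rho-integrable.\<close>
definition rel_entropy :: "'a measure \<Rightarrow> 'a measure \<Rightarrow> ereal" where
  "rel_entropy \<rho> \<sigma> =
     (if sets \<rho> = sets \<sigma> \<and> absolutely_continuous \<sigma> \<rho>
         \<and> integrable \<rho> (\<lambda>x. ln (enn2real (RN_deriv \<sigma> \<rho> x)))
      then ereal (\<integral>x. ln (enn2real (RN_deriv \<sigma> \<rho> x)) \<partial>\<rho>)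
      else \<infinity>)"

definition couplings :: "'a measure \<Rightarrow> 'b measure \<Rightarrow> ('a \<times> 'b) measure set" where
  "couplings \<mu> \<nu> = {\<pi>. sets \<pi> = sets (\<mu> \<Otimes>\<^sub>M \<nu>) \<and> prob_space \<pi>
                         \<and> distr \<pi> \<mu> fst = \<mu> \<and> distr \<pi> \<nu> snd = \<nu>}"

definition tildeC :: "'a measure \<Rightarrow> ('a \<Rightarrow> real) \<Rightarrow> ereal" where
  "tildeC \<mu> h = (INF \<alpha>\<in>{0<..}.
      (if integrable \<mu> (\<lambda>x. exp (\<alpha> * \<bar>h x\<bar>))
       then ereal (2 / \<alpha> * (3/2 + ln (\<integral>x. exp (\<alpha> * \<bar>h x\<bar>) \<partial>\<mu>)))
       else \<infinity>))"

end

theory Submission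
  imports Defs
begin

text \<open>Since \<open>\<pi>\<close>, \<open>\<pi>'\<close> and \<open>R\<close> all have densities of the form \<open>exp (\<phi> - c)\<close> with respect
  to \<open>\<mu> \<otimes> \<nu>\<close>, the log-likelihood ratios are \<open>log (d\<pi>'/dR) = f' \<oplus> g' + log \<xi>\<close> and
  \<open>log (d\<pi>/dR) = log (d\<pi>/d\<pi>') + f' \<oplus> g' + log \<xi>\<close>; integrating and using the marginals gives
  \<open>H(\<pi>|R) - H(\<pi>'|R) = H(\<pi>|\<pi>') + (\<integral>f' d\<mu> - \<integral>f' d\<mu>') + (\<integral>g' d\<nu> - \<integral>g' d\<nu>')\<close>.

  A difference of means \<open>\<integral>\<psi> d\<mu> - \<integral>\<psi> d\<mu>'\<close> is controlled by the Gibbs variational inequality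
  \<open>\<integral>\<phi> d\<mu>' \<le> H(\<mu>'|\<mu>) - 1 + \<integral>exp \<phi> d\<mu>\<close> applied to \<open>\<phi> = -l\<psi>\<close>: the second-order remainder of
  \<open>exp (-l\<psi>)\<close> is \<open>l\<^sup>2\<close> times a function whose mean is controlled by \<open>\<integral>exp \<bar>\<psi>\<bar> d\<mu>\<close>, and optimising
  over \<open>l\<close> gives the bound \<open>(3 + 2 log \<integral>exp \<bar>\<psi>\<bar> d\<mu>) (\<surd>H + H/2)\<close>; rescaling \<open>\<psi> = \<alpha> f'\<close> yields
  the constant \<open>tildeC\<close>. If \<open>\<nu>' = \<nu>\<close> the second difference vanishes as soon as \<open>g' \<in> L\<^sup>1(\<nu>)\<close>,
  which follows from \<open>1 + t \<le> exp t\<close> applied to the density ratios \<open>d\<pi>'/d\<pi>\<close> and \<open>d(\<mu> \<otimes> \<nu>)/d\<pi>'\<close>.\<close>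

lemma fenchel_young_xlnx:
  fixes a b :: real
  assumes "0 \<le> a"
  shows "a * b \<le> a * ln a - a + exp b"
proof (cases "a = 0")
  case False
  then have a: "0 < a" using assms by simp
  have "a * (1 + (b - ln a)) \<le> a * exp (b - ln a)"
    using a by (intro mult_left_mono exp_ge_add_one_self) auto
  also have "a * exp (b - ln a) = exp b" using a by (simp add: exp_diff)
  finally show ?thesis by (simp add: algebra_simps)
qed simp

lemma abs_le_exp_abs: "\<bar>y :: real\<bar> \<le> exp \<bar>y\<bar>"
  using exp_ge_add_one_self[of "\<bar>y\<bar>"] by linarith

lemma max_zero_le_exp_add_abs:
  fixes t u :: real
  shows "max 0 u \<le> exp (t + u) + \<bar>t\<bar>"
proof -
  have "u \<le> exp (t + u) + \<bar>t\<bar>"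
    using exp_ge_add_one_self[of "t + u"] abs_ge_minus_self[of t] by linarith
  moreover have "0 \<le> exp (t + u) + \<bar>t\<bar>" by (intro add_nonneg_nonneg) simp_all
  ultimately show ?thesis by simp
qed

lemma exp_minus_le_taylor2:
  fixes z :: real
  shows "exp (- z) - 1 + z \<le> z\<^sup>2 / 2 * exp \<bar>z\<bar>"
proof -
  obtain t where t: "\<bar>t\<bar> \<le> \<bar>z\<bar>"
    and exp_eq: "exp (- z) = (\<Sum>m<2. (- z) ^ m / fact m) + exp t / fact 2 * (- z) ^ 2"
    using Maclaurin_exp_le[of "- z" 2] by auto
  have "exp t / 2 * z\<^sup>2 \<le> exp \<bar>z\<bar> / 2 * z\<^sup>2"
    using t by (intro mult_right_mono) auto
  with exp_eq show ?thesis by (simp add: numeral_2_eq_2 power2_eq_square algebra_simps)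
qed

lemma tangent_slope_antimono:
  fixes l x y :: real
  assumes l: "0 < l" "l \<le> 1/3" and "2 \<le> x" "x \<le> y"
  shows "(2*y + l*y\<^sup>2) * exp ((l-1)*y) \<le> (2*x + l*x\<^sup>2) * exp ((l-1)*x)"
proof (rule DERIV_nonpos_imp_nonincreasing[OF \<open>x \<le> y\<close>])
  fix t assume t: "x \<le> t" "t \<le> y"
  have "l * l \<le> 1/3 * (1/3)" using l by (intro mult_mono) auto
  then have "4*l\<^sup>2 + 4*l - 2 \<le> 0" "(4*l\<^sup>2 - 2) * (t-2) \<le> 0" "0 \<le> l*(1-l)*(t-2)\<^sup>2"
    using l t \<open>2 \<le> x\<close> by (auto simp: power2_eq_square intro!: mult_nonpos_nonneg)
  moreover have "2 + (4*l - 2)*t - l*(1-l)*t\<^sup>2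
      = (4*l\<^sup>2 + 4*l - 2) + (4*l\<^sup>2 - 2)*(t-2) - l*(1-l)*(t-2)\<^sup>2"
    by (simp add: power2_eq_square algebra_simps)
  ultimately have "(2 + (4*l - 2)*t - l*(1-l)*t\<^sup>2) * exp ((l-1)*t) \<le> 0"
    by (intro mult_nonpos_nonneg) auto
  moreover have "((\<lambda>t. (2*t + l*t\<^sup>2) * exp ((l-1)*t)) has_real_derivative
      (2 + (4*l - 2)*t - l*(1-l)*t\<^sup>2) * exp ((l-1)*t)) (at t)"
    by (rule derivative_eq_intros refl | simp)+ (simp add: power2_eq_square algebra_simps)
  ultimately show "\<exists>d. ((\<lambda>t. (2*t + l*t\<^sup>2) * exp ((l-1)*t)) has_real_derivative d) (at t) \<and> d \<le> 0"
    by blast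
qed

text \<open>In the variable \<open>s = exp t\<close> the left-hand side is \<open>(ln s)\<^sup>2 * s powr l\<close>, whose derivative
  is the decreasing function of \<open>tangent_slope_antimono\<close>; so it is concave on \<open>[exp 2, \<infinity>)\<close>
  and lies below its tangent line at \<open>s = exp A\<close>.\<close>
lemma sq_mult_exp_le_tangent:
  fixes l A t :: real
  assumes l: "0 < l" "l \<le> 1/3" and "2 \<le> A" "2 \<le> t"
  shows "t\<^sup>2 * exp (l*t) \<le> A\<^sup>2 * exp (l*A) + (2*A + l*A\<^sup>2) * exp ((l-1)*A) * (exp t - exp A)"
proof -
  define G where "G = (2*A + l*A\<^sup>2) * exp ((l-1)*A)"
  define \<Phi> where "\<Phi> = (\<lambda>t. A\<^sup>2 * exp (l*A) + G * (exp t - exp A) - t\<^sup>2 * exp (l*t))"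
  have deriv: "(\<Phi> has_real_derivative exp w * (G - (2*w + l*w\<^sup>2) * exp ((l-1)*w))) (at w)" for w
  proof -
    have "exp w * exp ((l-1)*w) = exp (l*w)" by (simp add: exp_add[symmetric] algebra_simps)
    then have "exp w * (G - (2*w + l*w\<^sup>2) * exp ((l-1)*w)) = G * exp w - (2*w + l*w\<^sup>2) * exp (l*w)"
      by (metis mult.commute mult.left_commute right_diff_distrib)
    moreover have "(\<Phi> has_real_derivative G * exp w - (2*w + l*w\<^sup>2) * exp (l*w)) (at w)"
      unfolding \<Phi>_def
      by (rule derivative_eq_intros refl | simp)+ (simp add: power2_eq_square algebra_simps)
    ultimately show ?thesis by simp
  qed
  have "\<Phi> A \<le> \<Phi> t"
  proof (cases "A \<le> t")
    case True
    show ?thesis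
    proof (rule DERIV_nonneg_imp_nondecreasing[OF True])
      fix w assume "A \<le> w" "w \<le> t"
      then have "(2*w + l*w\<^sup>2) * exp ((l-1)*w) \<le> G"
        unfolding G_def using \<open>2 \<le> A\<close> l by (intro tangent_slope_antimono) auto
      then have "0 \<le> exp w * (G - (2*w + l*w\<^sup>2) * exp ((l-1)*w))" by simp
      with deriv show "\<exists>d. (\<Phi> has_real_derivative d) (at w) \<and> 0 \<le> d" by blast
    qed
  next
    case False
    then have "t \<le> A" by simp
    then show ?thesis
    proof (rule DERIV_nonpos_imp_nonincreasing)
      fix w assume "t \<le> w" "w \<le> A"
      then have "G \<le> (2*w + l*w\<^sup>2) * exp ((l-1)*w)"
        unfolding G_def using \<open>2 \<le> t\<close> l by (intro tangent_slope_antimono) auto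
      then have "exp w * (G - (2*w + l*w\<^sup>2) * exp ((l-1)*w)) \<le> 0"
        by (intro mult_nonneg_nonpos) auto
      with deriv show "\<exists>d. (\<Phi> has_real_derivative d) (at w) \<and> d \<le> 0" by blast
    qed
  qed
  then show ?thesis by (simp add: \<Phi>_def G_def)
qed

lemma exp_second_order_le_tangent:
  fixes l A y :: real
  assumes l: "0 < l" "l \<le> 1/3" and A: "2 \<le> A"
  shows "exp (- (l*y)) - 1 + l*y
    \<le> l\<^sup>2 / 2 * (A\<^sup>2 * exp (l*A) + (2*A + l*A\<^sup>2) * exp ((l-1)*A) * (exp 2 * exp \<bar>y\<bar> - exp A))"
proof -
  have "exp (- (l*y)) - 1 + l*y \<le> (l*y)\<^sup>2 / 2 * exp \<bar>l*y\<bar>" by (rule exp_minus_le_taylor2)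
  also have "\<dots> = l\<^sup>2 / 2 * (\<bar>y\<bar>\<^sup>2 * exp (l * \<bar>y\<bar>))"
    using l by (simp add: abs_mult power_mult_distrib)
  also have "\<bar>y\<bar>\<^sup>2 * exp (l * \<bar>y\<bar>) \<le> (\<bar>y\<bar> + 2)\<^sup>2 * exp (l * (\<bar>y\<bar> + 2))"
    using l by (intro mult_mono power_mono) auto
  also have "\<dots> \<le> A\<^sup>2 * exp (l*A) + (2*A + l*A\<^sup>2) * exp ((l-1)*A) * (exp (\<bar>y\<bar> + 2) - exp A)"
    using l A by (intro sq_mult_exp_le_tangent) auto
  finally show ?thesis using l by (simp add: exp_add mult.commute mult_left_mono)
qed

lemma exists_scale_bound:
  fixes s :: real
  assumes s: "0 < s" "s < 37/50"
  shows "\<exists>u. 0 < u \<and> u \<le> 11/20 \<and> s\<^sup>2/u + u * exp u / 2 \<le> 3/4 * (2 * s + s\<^sup>2)"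
proof -
  consider "s \<le> 1/2" | "1/2 < s" "s \<le> 59/100" | "59/100 < s"
    by linarith
  then show ?thesis
  proof cases
    case 1
    have "exp s \<le> 1 + s + s\<^sup>2" using s by (intro exp_bound) auto
    also have "\<dots> \<le> 1 + 3/2 * s" using 1 s by (simp add: power2_eq_square)
    finally have "s * exp s / 2 \<le> s * (1 + 3/2 * s) / 2"
      using s by (intro divide_right_mono mult_left_mono) auto
    then show ?thesis using s 1 by (intro exI[of _ s]) (simp add: power2_eq_square algebra_simps)
  next
    case 2
    have "0 \<le> (s - 1/2) * (59/100 - s)" using 2 by (intro mult_nonneg_nonneg) auto
    moreover have "(s - 1/2) * (59/100 - s) = 109/100 * s - 59/200 - s\<^sup>2"
      by (simp add: power2_eq_square field_simps)
    ultimately have "s\<^sup>2 \<le> 109/100 * s - 59/200" by linarith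
    moreover have "exp (9/20::real) \<le> 1 + 9/20 + (9/20)\<^sup>2" by (intro exp_bound) auto
    ultimately have "s\<^sup>2/(9/20) + 9/20 * exp (9/20) / 2 \<le> 3/4 * (2 * s + s\<^sup>2)"
      using 2 by (simp add: field_simps)
    then show ?thesis by (intro exI[of _ "9/20"]) auto
  next
    case 3
    have "0 \<le> (s - 59/100) * (37/50 - s)" using 3 s by (intro mult_nonneg_nonneg) auto
    moreover have "(s - 59/100) * (37/50 - s) = 133/100 * s - 2183/5000 - s\<^sup>2"
      by (simp add: power2_eq_square field_simps)
    ultimately have "s\<^sup>2 \<le> 133/100 * s - 2183/5000" by linarith
    moreover have "exp (11/20::real) \<le> 1 + 11/20 + (11/20)\<^sup>2" by (intro exp_bound) auto
    ultimately have "s\<^sup>2/(11/20) + 11/20 * exp (11/20) / 2 \<le> 3/4 * (2 * s + s\<^sup>2)"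
      using 3 s by (simp add: field_simps)
    then show ?thesis by (intro exI[of _ "11/20"]) auto
  qed
qed

lemma le_sqrt_bound_of_forall_sq:
  fixes D H K :: real
  assumes "0 \<le> H" "0 \<le> K"
    and bound: "\<And>s. 0 < s \<Longrightarrow> H \<le> s\<^sup>2 \<Longrightarrow> D \<le> K * (s + s\<^sup>2 / 2)"
  shows "D \<le> K * (sqrt H + H / 2)"
proof (cases "H = 0")
  case True
  have "((\<lambda>s. K * (s + s\<^sup>2 / 2)) \<longlongrightarrow> 0) (at_right 0)"
    by (auto intro!: tendsto_eq_intros)
  moreover have "eventually (\<lambda>s. D \<le> K * (s + s\<^sup>2 / 2)) (at_right 0)"
    using eventually_at_right_less[of "0::real"] by eventually_elim (simp add: True bound)
  ultimately have "D \<le> 0" by (rule tendsto_lowerbound) simp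
  then show ?thesis using True by simp
qed (use assms bound[of "sqrt H"] in simp)

lemma (in prob_space) integral_abs_le_ln_exp_moment:
  fixes \<psi> :: "'a \<Rightarrow> real"
  assumes [measurable]: "\<psi> \<in> borel_measurable M" and exp_int: "integrable M (\<lambda>x. exp \<bar>\<psi> x\<bar>)"
  shows "(\<integral>x. \<bar>\<psi> x\<bar> \<partial>M) \<le> ln (\<integral>x. exp \<bar>\<psi> x\<bar> \<partial>M)"
proof -
  have "integrable M (\<lambda>x. \<bar>\<psi> x\<bar>)"
    by (rule Bochner_Integration.integrable_bound[OF exp_int]) (auto simp: abs_le_exp_abs)
  then have "exp (\<integral>x. \<bar>\<psi> x\<bar> \<partial>M) \<le> (\<integral>x. exp \<bar>\<psi> x\<bar> \<partial>M)"
    using exp_int by (intro jensens_inequality[where I=UNIV]) (auto simp: exp_convex)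
  then show ?thesis by (metis exp_gt_zero ln_exp ln_le_cancel_iff order_less_le_trans)
qed

lemma tildeC_exp_moment:
  assumes "tildeC \<mu> f < \<infinity>"
  obtains \<alpha> where "0 < \<alpha>" "integrable \<mu> (\<lambda>x. exp (\<alpha> * \<bar>f x\<bar>))"
  using assms unfolding tildeC_def INF_less_iff by (auto split: if_splits)

lemma ereal_le_tildeC_mult:
  fixes D k :: real
  assumes fin: "tildeC \<mu> f < \<infinity>" and "0 \<le> k"
    and bound: "\<And>\<alpha>. 0 < \<alpha> \<Longrightarrow> integrable \<mu> (\<lambda>x. exp (\<alpha> * \<bar>f x\<bar>)) \<Longrightarrow>
      D \<le> 2 / \<alpha> * (3/2 + ln (\<integral>x. exp (\<alpha> * \<bar>f x\<bar>) \<partial>\<mu>)) * k"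
  shows "ereal D \<le> tildeC \<mu> f * ereal k"
proof (cases "k = 0")
  case True
  obtain \<alpha> where "0 < \<alpha>" "integrable \<mu> (\<lambda>x. exp (\<alpha> * \<bar>f x\<bar>))"
    using tildeC_exp_moment[OF fin] by blast
  with bound True show ?thesis by (simp add: zero_ereal_def[symmetric])
next
  case False
  then have k: "0 < k" using \<open>0 \<le> k\<close> by simp
  have "ereal (D / k) \<le> tildeC \<mu> f"
    unfolding tildeC_def
  proof (rule INF_greatest)
    fix \<alpha> :: real assume "\<alpha> \<in> {0<..}"
    then show "ereal (D / k) \<le> (if integrable \<mu> (\<lambda>x. exp (\<alpha> * \<bar>f x\<bar>))
        then ereal (2 / \<alpha> * (3/2 + ln (\<integral>x. exp (\<alpha> * \<bar>f x\<bar>) \<partial>\<mu>))) else \<infinity>)"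
      using bound[of \<alpha>] k by (simp add: divide_le_eq)
  qed
  then have "ereal (D / k) * ereal k \<le> tildeC \<mu> f * ereal k"
    using k by (intro ereal_mult_right_mono) auto
  then show ?thesis using k by simp
qed

text \<open>A probability density \<open>h\<close> of \<open>\<mu>' = h \<mu>\<close> with finite entropy: \<open>KL = H(\<mu>'|\<mu>)\<close> and
  \<open>mean_shift \<psi> = \<integral>\<psi> d\<mu> - \<integral>\<psi> d\<mu>'\<close>.\<close>
locale prob_density = prob_space \<mu> for \<mu> :: "'a measure" +
  fixes h :: "'a \<Rightarrow> real"
  assumes borel_measurable_h [measurable]: "h \<in> borel_measurable \<mu>"
    and h_nonneg: "\<And>x. 0 \<le> h x"
    and integrable_h: "integrable \<mu> h"
    and integral_h: "(\<integral>x. h x \<partial>\<mu>) = 1"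
    and integrable_h_ln_h: "integrable \<mu> (\<lambda>x. h x * ln (h x))"
begin

definition KL :: real where "KL = (\<integral>x. h x * ln (h x) \<partial>\<mu>)"

definition mean_shift :: "('a \<Rightarrow> real) \<Rightarrow> real" where
  "mean_shift \<psi> = (\<integral>x. \<psi> x \<partial>\<mu>) - (\<integral>x. h x * \<psi> x \<partial>\<mu>)"

definition log_exp_moment :: "('a \<Rightarrow> real) \<Rightarrow> real" where
  "log_exp_moment \<psi> = ln (\<integral>x. exp \<bar>\<psi> x\<bar> \<partial>\<mu>)"

lemma KL_nonneg: "0 \<le> KL"
proof -
  have "h x - 1 \<le> h x * ln (h x)" for x
    using fenchel_young_xlnx[OF h_nonneg, of x 0] by simp
  then have "(\<integral>x. h x - 1 \<partial>\<mu>) \<le> KL"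
    unfolding KL_def using integrable_h integrable_h_ln_h by (intro integral_mono) auto
  then show ?thesis using integrable_h integral_h by (simp add: prob_space)
qed

lemma gibbs_variational_ineq:
  assumes "integrable \<mu> (\<lambda>x. exp (\<phi> x))" and "integrable \<mu> (\<lambda>x. h x * \<phi> x)"
  shows "(\<integral>x. h x * \<phi> x \<partial>\<mu>) \<le> KL - 1 + (\<integral>x. exp (\<phi> x) \<partial>\<mu>)"
proof -
  have "(\<integral>x. h x * \<phi> x \<partial>\<mu>) \<le> (\<integral>x. h x * ln (h x) - h x + exp (\<phi> x) \<partial>\<mu>)"
    using assms integrable_h integrable_h_ln_h
    by (intro integral_mono) (auto intro!: fenchel_young_xlnx h_nonneg)
  also have "\<dots> = KL - 1 + (\<integral>x. exp (\<phi> x) \<partial>\<mu>)"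
    using assms integrable_h integrable_h_ln_h by (simp add: KL_def integral_h)
  finally show ?thesis .
qed

lemma integrable_h_mult:
  assumes [measurable]: "\<psi> \<in> borel_measurable \<mu>" and "integrable \<mu> (\<lambda>x. exp \<bar>\<psi> x\<bar>)"
  shows "integrable \<mu> (\<lambda>x. h x * \<psi> x)"
proof (rule Bochner_Integration.integrable_bound)
  show "integrable \<mu> (\<lambda>x. h x * ln (h x) - h x + exp \<bar>\<psi> x\<bar>)"
    using assms integrable_h integrable_h_ln_h by simp
  show "AE x in \<mu>. norm (h x * \<psi> x) \<le> norm (h x * ln (h x) - h x + exp \<bar>\<psi> x\<bar>)"
  proof (intro AE_I2)
    fix x
    have "h x * \<bar>\<psi> x\<bar> \<le> h x * ln (h x) - h x + exp \<bar>\<psi> x\<bar>"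
      by (rule fenchel_young_xlnx[OF h_nonneg])
    moreover have "norm (h x * \<psi> x) = h x * \<bar>\<psi> x\<bar>" using h_nonneg[of x] by (simp add: abs_mult)
    ultimately show "norm (h x * \<psi> x) \<le> norm (h x * ln (h x) - h x + exp \<bar>\<psi> x\<bar>)"
      using h_nonneg[of x] by simp
  qed
qed simp

context
  fixes \<psi> :: "'a \<Rightarrow> real"
  assumes borel_measurable_\<psi> [measurable]: "\<psi> \<in> borel_measurable \<mu>"
    and integrable_exp_abs: "integrable \<mu> (\<lambda>x. exp \<bar>\<psi> x\<bar>)"
begin

lemma integrable_\<psi>: "integrable \<mu> \<psi>"
  by (rule Bochner_Integration.integrable_bound[OF integrable_exp_abs]) (auto simp: abs_le_exp_abs)

lemma integrable_h_mult_\<psi>: "integrable \<mu> (\<lambda>x. h x * \<psi> x)"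
  by (rule integrable_h_mult[OF borel_measurable_\<psi> integrable_exp_abs])

lemma exp_moment_ge_1: "1 \<le> (\<integral>x. exp \<bar>\<psi> x\<bar> \<partial>\<mu>)"
  using integral_mono[OF _ integrable_exp_abs, of "\<lambda>_. 1"] by (simp add: prob_space)

lemma log_exp_moment_nonneg: "0 \<le> log_exp_moment \<psi>"
  using exp_moment_ge_1 by (simp add: log_exp_moment_def)

lemma mean_shift_le_crude: "mean_shift \<psi> \<le> 2 * log_exp_moment \<psi> + KL"
proof -
  define L where "L = log_exp_moment \<psi>"
  have int_abs: "integrable \<mu> (\<lambda>x. h x * \<bar>\<psi> x\<bar>)"
    using integrable_h_mult[of "\<lambda>x. \<bar>\<psi> x\<bar>"] integrable_exp_abs by simp
  have "(\<integral>x. h x * (\<bar>\<psi> x\<bar> - L) \<partial>\<mu>) \<le> KL - 1 + (\<integral>x. exp (\<bar>\<psi> x\<bar> - L) \<partial>\<mu>)"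
    using integrable_exp_abs int_abs integrable_h
    by (intro gibbs_variational_ineq) (simp_all add: exp_diff right_diff_distrib)
  moreover have "(\<integral>x. exp (\<bar>\<psi> x\<bar> - L) \<partial>\<mu>) = 1"
    using exp_moment_ge_1 by (simp add: exp_diff L_def log_exp_moment_def)
  moreover have "(\<integral>x. h x * (\<bar>\<psi> x\<bar> - L) \<partial>\<mu>) = (\<integral>x. h x * \<bar>\<psi> x\<bar> \<partial>\<mu>) - L"
    using int_abs integrable_h by (simp add: right_diff_distrib integral_h)
  moreover have "(\<integral>x. \<psi> x \<partial>\<mu>) \<le> L"
    using integral_mono[OF integrable_\<psi> _ abs_ge_self] integrable_\<psi>
      integral_abs_le_ln_exp_moment[OF borel_measurable_\<psi> integrable_exp_abs]
    by (simp add: L_def log_exp_moment_def)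
  moreover have "- (h x * \<psi> x) \<le> h x * \<bar>\<psi> x\<bar>" for x
    using abs_ge_minus_self[of "h x * \<psi> x"] h_nonneg[of x] by (simp add: abs_mult)
  then have "(\<integral>x. - (h x * \<psi> x) \<partial>\<mu>) \<le> (\<integral>x. h x * \<bar>\<psi> x\<bar> \<partial>\<mu>)"
    using integrable_h_mult_\<psi> int_abs by (intro integral_mono) auto
  ultimately show ?thesis by (simp add: mean_shift_def L_def)
qed

lemma mean_shift_le_second_order:
  fixes l :: real
  defines "A \<equiv> log_exp_moment \<psi> + 2"
  assumes l: "0 < l" "l \<le> 1/3"
  shows "l * mean_shift \<psi> \<le> KL + l\<^sup>2 / 2 * (A\<^sup>2 * exp (l * A))"
proof -
  define G where "G = (2*A + l*A\<^sup>2) * exp ((l-1)*A)"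
  have A: "2 \<le> A" using log_exp_moment_nonneg by (simp add: A_def)
  have "- (l * \<psi> x) \<le> \<bar>\<psi> x\<bar>" for x
    using l mult_right_mono[of l 1 "\<bar>\<psi> x\<bar>"] abs_ge_minus_self[of "l * \<psi> x"]
    by (simp add: abs_mult)
  then have int_exp: "integrable \<mu> (\<lambda>x. exp (- l * \<psi> x))"
    by (intro Bochner_Integration.integrable_bound[OF integrable_exp_abs]) auto
  have gibbs: "(\<integral>x. h x * (- l * \<psi> x) \<partial>\<mu>) \<le> KL - 1 + (\<integral>x. exp (- l * \<psi> x) \<partial>\<mu>)"
    using int_exp integrable_h_mult_\<psi> by (intro gibbs_variational_ineq) (simp_all add: algebra_simps)
  have "(\<integral>x. exp (- l * \<psi> x) - 1 + l * \<psi> x \<partial>\<mu>)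
      \<le> (\<integral>x. l\<^sup>2 / 2 * (A\<^sup>2 * exp (l*A) + G * (exp 2 * exp \<bar>\<psi> x\<bar> - exp A)) \<partial>\<mu>)"
  proof (rule integral_mono)
    show "integrable \<mu> (\<lambda>x. exp (- l * \<psi> x) - 1 + l * \<psi> x)" using int_exp integrable_\<psi> by simp
    show "integrable \<mu> (\<lambda>x. l\<^sup>2 / 2 * (A\<^sup>2 * exp (l*A) + G * (exp 2 * exp \<bar>\<psi> x\<bar> - exp A)))"
      using integrable_exp_abs by simp
  qed (use exp_second_order_le_tangent[OF l A] in \<open>simp add: G_def\<close>)
  also have "\<dots> = l\<^sup>2 / 2 * (A\<^sup>2 * exp (l*A) + G * (exp 2 * (\<integral>x. exp \<bar>\<psi> x\<bar> \<partial>\<mu>) - exp A))"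
    using integrable_exp_abs by (simp add: prob_space)
  also have "exp 2 * (\<integral>x. exp \<bar>\<psi> x\<bar> \<partial>\<mu>) = exp A"
    using exp_moment_ge_1
    by (simp add: A_def log_exp_moment_def exp_add)
  finally have second_order: "(\<integral>x. exp (- l * \<psi> x) \<partial>\<mu>) - 1 + l * (\<integral>x. \<psi> x \<partial>\<mu>)
      \<le> l\<^sup>2 / 2 * (A\<^sup>2 * exp (l*A))"
    using int_exp integrable_\<psi> by (simp add: prob_space)
  have "(\<integral>x. h x * (- l * \<psi> x) \<partial>\<mu>) = - l * (\<integral>x. h x * \<psi> x \<partial>\<mu>)"
    by (simp add: algebra_simps)
  with gibbs second_order show ?thesis
    by (simp add: mean_shift_def right_diff_distrib)
qed

lemma mean_shift_le_scale:
  fixes s :: real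
  assumes s: "0 < s" "KL \<le> s\<^sup>2"
  shows "mean_shift \<psi> \<le> (3 + 2 * log_exp_moment \<psi>) * (s + s\<^sup>2 / 2)"
proof (cases "s < 37/50")
  case True
  define A where "A = log_exp_moment \<psi> + 2"
  have A: "2 \<le> A" using log_exp_moment_nonneg by (simp add: A_def)
  obtain u where u: "0 < u" "u \<le> 11/20" "s\<^sup>2/u + u * exp u / 2 \<le> 3/4 * (2 * s + s\<^sup>2)"
    using exists_scale_bound[OF s(1) True] by blast
  \<comment> \<open>the scale \<open>l = u / A\<close> makes the exponent \<open>l * A = u\<close> independent of \<open>\<psi>\<close>\<close>
  have l: "0 < u / A" "u / A \<le> 1/3"
    using u A by (auto simp: divide_le_eq)
  have "u / A * mean_shift \<psi> \<le> KL + (u / A)\<^sup>2 / 2 * (A\<^sup>2 * exp u)"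
    using mean_shift_le_second_order[OF l] A by (simp add: A_def)
  then have "mean_shift \<psi> \<le> A * (KL / u + u * exp u / 2)"
    using u A by (simp add: field_simps power2_eq_square)
  also have "\<dots> \<le> A * (s\<^sup>2 / u + u * exp u / 2)"
    using u A s by (intro mult_left_mono add_right_mono divide_right_mono) auto
  also have "\<dots> \<le> A * (3/4 * (2 * s + s\<^sup>2))"
    using u A by (intro mult_left_mono) auto
  also have "\<dots> = (3/4 * A) * (2 * s + s\<^sup>2)" by simp
  also have "\<dots> \<le> (A - 1/2) * (2 * s + s\<^sup>2)"
    using A s by (intro mult_right_mono) auto
  finally show ?thesis by (simp add: A_def algebra_simps)
next
  case False
  have "1 \<le> s + s\<^sup>2 / 2" and "s\<^sup>2 \<le> 3 * (s + s\<^sup>2 / 2)"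
    using False power_mono[of "37/50" s 2] by (auto simp: power2_eq_square)
  then have "2 * log_exp_moment \<psi> + KL \<le> (3 + 2 * log_exp_moment \<psi>) * (s + s\<^sup>2 / 2)"
    using s log_exp_moment_nonneg mult_left_mono[of 1 "s + s\<^sup>2 / 2" "2 * log_exp_moment \<psi>"]
    by (simp add: distrib_right)
  then show ?thesis using mean_shift_le_crude by linarith
qed

lemma mean_shift_le: "mean_shift \<psi> \<le> (3 + 2 * log_exp_moment \<psi>) * (sqrt KL + KL / 2)"
  using KL_nonneg log_exp_moment_nonneg mean_shift_le_scale by (intro le_sqrt_bound_of_forall_sq) auto

end

lemma mean_shift_le_tildeC:
  assumes [measurable]: "f \<in> borel_measurable \<mu>" and fin: "tildeC \<mu> f < \<infinity>"
  shows "ereal (mean_shift f) \<le> tildeC \<mu> f * ereal (sqrt KL + KL / 2)"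
proof (rule ereal_le_tildeC_mult[OF fin])
  show "0 \<le> sqrt KL + KL / 2" using KL_nonneg by simp
  fix \<alpha> :: real assume \<alpha>: "0 < \<alpha>" "integrable \<mu> (\<lambda>x. exp (\<alpha> * \<bar>f x\<bar>))"
  then have exp_int: "integrable \<mu> (\<lambda>x. exp \<bar>\<alpha> * f x\<bar>)" by (simp add: abs_mult)
  have "integrable \<mu> (\<lambda>x. \<alpha> * f x)" and "integrable \<mu> (\<lambda>x. h x * (\<alpha> * f x))"
    using integrable_\<psi>[OF _ exp_int] integrable_h_mult_\<psi>[OF _ exp_int] by auto
  then have "mean_shift (\<lambda>x. \<alpha> * f x) = \<alpha> * mean_shift f"
    using \<alpha> by (simp add: mean_shift_def mult.left_commute right_diff_distrib)
  moreover have "log_exp_moment (\<lambda>x. \<alpha> * f x) = ln (\<integral>x. exp (\<alpha> * \<bar>f x\<bar>) \<partial>\<mu>)"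
    using \<alpha> by (simp add: log_exp_moment_def abs_mult)
  ultimately have "\<alpha> * mean_shift f \<le> (3 + 2 * ln (\<integral>x. exp (\<alpha> * \<bar>f x\<bar>) \<partial>\<mu>)) * (sqrt KL + KL / 2)"
    using mean_shift_le[OF _ exp_int] by simp
  then show "mean_shift f \<le> 2 / \<alpha> * (3/2 + ln (\<integral>x. exp (\<alpha> * \<bar>f x\<bar>) \<partial>\<mu>)) * (sqrt KL + KL / 2)"
    using \<alpha> by (simp add: field_simps)
qed

end

lemma rel_entropy_density_exp:
  fixes P :: "'a measure" and a b :: "'a \<Rightarrow> real"
  defines "\<rho> \<equiv> density P (\<lambda>x. ennreal (exp (a x)))"
  assumes "sigma_finite_measure P"
    and [measurable]: "a \<in> borel_measurable P" "b \<in> borel_measurable P"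
  shows "rel_entropy \<rho> (density P (\<lambda>x. ennreal (exp (b x))))
    = (if integrable \<rho> (\<lambda>x. a x - b x) then ereal (\<integral>x. a x - b x \<partial>\<rho>) else \<infinity>)"
proof -
  interpret P: sigma_finite_measure P by fact
  define \<sigma> where "\<sigma> = density P (\<lambda>x. ennreal (exp (b x)))"
  have sets: "sets \<rho> = sets \<sigma>" by (simp add: \<rho>_def \<sigma>_def)
  have ac: "absolutely_continuous \<sigma> \<rho>"
    unfolding absolutely_continuous_def \<rho>_def \<sigma>_def
    by (auto simp: null_sets_density_iff)
  have "density \<sigma> (\<lambda>x. ennreal (exp (a x - b x))) = \<rho>"
    unfolding \<sigma>_def \<rho>_def
    by (subst density_density_eq) (auto simp: ennreal_mult'[symmetric] exp_diff)
  moreover have "sigma_finite_measure \<sigma>"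
    unfolding \<sigma>_def by (subst P.sigma_finite_iff_density_finite) auto
  ultimately have "AE x in \<sigma>. ennreal (exp (a x - b x)) = RN_deriv \<sigma> \<rho> x"
    by (intro sigma_finite_measure.RN_deriv_unique) (auto simp: \<sigma>_def)
  then have "AE x in \<rho>. ennreal (exp (a x - b x)) = RN_deriv \<sigma> \<rho> x"
    by (rule absolutely_continuous_AE[OF sets ac])
  then have ae: "AE x in \<rho>. ln (enn2real (RN_deriv \<sigma> \<rho> x)) = a x - b x"
    by eventually_elim (metis enn2real_ennreal exp_ge_zero ln_exp)
  have meas_ln: "(\<lambda>x. ln (enn2real (RN_deriv \<sigma> \<rho> x))) \<in> borel_measurable \<rho>"
    by (subst measurable_cong_sets[OF sets refl]) measurable
  have meas_diff: "(\<lambda>x. a x - b x) \<in> borel_measurable \<rho>" by (simp add: \<rho>_def)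
  note integrable_cong_AE[OF meas_ln meas_diff ae] integral_cong_AE[OF meas_ln meas_diff ae]
  then show ?thesis
    unfolding rel_entropy_def \<sigma>_def[symmetric] using sets ac by simp
qed

lemma rel_entropy_finite_imp_prob_density:
  fixes \<mu> \<mu>' :: "'a measure"
  defines "h \<equiv> \<lambda>x. enn2real (RN_deriv \<mu> \<mu>' x)"
  assumes "prob_space \<mu>" "prob_space \<mu>'" and sets: "sets \<mu>' = sets \<mu>"
    and fin: "rel_entropy \<mu>' \<mu> < \<infinity>"
  shows "prob_density \<mu> h" and "\<mu>' = density \<mu> (\<lambda>x. ennreal (h x))"
    and "rel_entropy \<mu>' \<mu> = ereal (prob_density.KL \<mu> h)"
proof -
  interpret prob_space \<mu> by fact
  interpret \<mu>': prob_space \<mu>' by fact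
  have ac: "absolutely_continuous \<mu> \<mu>'"
    and int_ln: "integrable \<mu>' (\<lambda>x. ln (h x))"
    and ent: "rel_entropy \<mu>' \<mu> = ereal (\<integral>x. ln (h x) \<partial>\<mu>')"
    using fin unfolding rel_entropy_def h_def by (auto split: if_splits simp: sets)
  have [measurable]: "h \<in> borel_measurable \<mu>" by (simp add: h_def)
  have "AE x in \<mu>. RN_deriv \<mu> \<mu>' x \<noteq> \<infinity>"
    by (rule RN_deriv_finite[OF _ ac sets]) (simp add: \<mu>'.sigma_finite_measure_axioms)
  then have "AE x in \<mu>. RN_deriv \<mu> \<mu>' x = ennreal (h x)"
    by eventually_elim (auto simp: h_def less_top)
  then have "density \<mu> (RN_deriv \<mu> \<mu>') = density \<mu> (\<lambda>x. ennreal (h x))"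
    by (intro density_cong) (auto simp: h_def)
  then show dens: "\<mu>' = density \<mu> (\<lambda>x. ennreal (h x))"
    using density_RN_deriv[OF ac sets] by simp
  have transfer_integrable: "integrable \<mu>' F \<longleftrightarrow> integrable \<mu> (\<lambda>x. h x * F x)"
    and transfer_integral: "(\<integral>x. F x \<partial>\<mu>') = (\<integral>x. h x * F x \<partial>\<mu>)"
    if [measurable]: "F \<in> borel_measurable \<mu>" for F
    by (subst dens; simp add: integrable_density integral_density h_def)+
  have ln_h: "(\<lambda>x. ln (h x)) \<in> borel_measurable \<mu>" by measurable
  show "prob_density \<mu> h"
    using transfer_integrable[of "\<lambda>_. 1"] transfer_integral[of "\<lambda>_. 1"]
      transfer_integrable[OF ln_h] int_ln \<mu>'.prob_space
    by unfold_locales (auto simp: h_def)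
  then show "rel_entropy \<mu>' \<mu> = ereal (prob_density.KL \<mu> h)"
    using ent transfer_integral[OF ln_h] by (simp add: prob_density.KL_def)
qed

lemma integral_diff_le_tildeC_rel_entropy:
  fixes \<mu> \<mu>' :: "'a measure" and f :: "'a \<Rightarrow> real"
  assumes "prob_space \<mu>" "prob_space \<mu>'" and sets: "sets \<mu>' = sets \<mu>"
    and fin: "rel_entropy \<mu>' \<mu> < \<infinity>"
    and [measurable]: "f \<in> borel_measurable \<mu>" and C: "tildeC \<mu> f < \<infinity>"
  shows "integrable \<mu> f" and "integrable \<mu>' f"
    and "ereal ((\<integral>x. f x \<partial>\<mu>) - (\<integral>x. f x \<partial>\<mu>')) \<le> tildeC \<mu> f *
      ereal (sqrt (real_of_ereal (rel_entropy \<mu>' \<mu>)) + real_of_ereal (rel_entropy \<mu>' \<mu>) / 2)"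
proof -
  define h where "h = (\<lambda>x. enn2real (RN_deriv \<mu> \<mu>' x))"
  note density = rel_entropy_finite_imp_prob_density[OF assms(1-4), folded h_def]
  interpret prob_density \<mu> h by (rule density(1))
  obtain \<alpha> where "0 < \<alpha>" "integrable \<mu> (\<lambda>x. exp (\<alpha> * \<bar>f x\<bar>))"
    using tildeC_exp_moment[OF C] by blast
  then have exp_int: "integrable \<mu> (\<lambda>x. exp \<bar>\<alpha> * f x\<bar>)" by (simp add: abs_mult)
  have "integrable \<mu> (\<lambda>x. \<alpha> * f x)" "integrable \<mu> (\<lambda>x. h x * (\<alpha> * f x))"
    using integrable_\<psi>[OF _ exp_int] integrable_h_mult_\<psi>[OF _ exp_int] by simp_all
  then have int_f: "integrable \<mu> f" and int_hf: "integrable \<mu> (\<lambda>x. h x * f x)"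
    using \<open>0 < \<alpha>\<close> by (simp_all add: mult.left_commute)
  show "integrable \<mu> f" by (fact int_f)
  show "integrable \<mu>' f"
    using int_hf by (subst density(2)) (simp add: integrable_density h_def)
  have "(\<integral>x. f x \<partial>\<mu>') = (\<integral>x. h x * f x \<partial>\<mu>)"
    by (subst density(2)) (simp add: integral_density h_def)
  then show "ereal ((\<integral>x. f x \<partial>\<mu>) - (\<integral>x. f x \<partial>\<mu>')) \<le> tildeC \<mu> f *
      ereal (sqrt (real_of_ereal (rel_entropy \<mu>' \<mu>)) + real_of_ereal (rel_entropy \<mu>' \<mu>) / 2)"
    using mean_shift_le_tildeC[OF assms(5) C] density(3) by (simp add: mean_shift_def)
qed

lemma coupling_fst:
  fixes F :: "'a \<Rightarrow> real"
  assumes "\<pi> \<in> couplings \<mu> \<nu>" and "F \<in> borel_measurable \<mu>"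
  shows "integrable \<pi> (\<lambda>z. F (fst z)) \<longleftrightarrow> integrable \<mu> F"
    and "(\<integral>z. F (fst z) \<partial>\<pi>) = (\<integral>x. F x \<partial>\<mu>)"
proof -
  have sets: "sets \<pi> = sets (\<mu> \<Otimes>\<^sub>M \<nu>)" and marginal: "distr \<pi> \<mu> fst = \<mu>"
    using assms(1) by (simp_all add: couplings_def)
  have meas: "fst \<in> measurable \<pi> \<mu>"
    by (subst measurable_cong_sets[OF sets refl]) (rule measurable_fst)
  show "integrable \<pi> (\<lambda>z. F (fst z)) \<longleftrightarrow> integrable \<mu> F"
    and "(\<integral>z. F (fst z) \<partial>\<pi>) = (\<integral>x. F x \<partial>\<mu>)"
    using integrable_distr_eq[OF meas assms(2)] integral_distr[OF meas assms(2)] marginal by simp_all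
qed

lemma coupling_snd:
  fixes F :: "'b \<Rightarrow> real"
  assumes "\<pi> \<in> couplings \<mu> \<nu>" and "F \<in> borel_measurable \<nu>"
  shows "integrable \<pi> (\<lambda>z. F (snd z)) \<longleftrightarrow> integrable \<nu> F"
    and "(\<integral>z. F (snd z) \<partial>\<pi>) = (\<integral>y. F y \<partial>\<nu>)"
proof -
  have sets: "sets \<pi> = sets (\<mu> \<Otimes>\<^sub>M \<nu>)" and marginal: "distr \<pi> \<nu> snd = \<nu>"
    using assms(1) by (simp_all add: couplings_def)
  have meas: "snd \<in> measurable \<pi> \<nu>"
    by (subst measurable_cong_sets[OF sets refl]) (rule measurable_snd)
  show "integrable \<pi> (\<lambda>z. F (snd z)) \<longleftrightarrow> integrable \<nu> F"
    and "(\<integral>z. F (snd z) \<partial>\<pi>) = (\<integral>y. F y \<partial>\<nu>)"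
    using integrable_distr_eq[OF meas assms(2)] integral_distr[OF meas assms(2)] marginal by simp_all
qed

lemma rel_entropy_tilted_diff:
  fixes P :: "'a measure" and c \<phi> \<phi>' :: "'a \<Rightarrow> real" and \<xi> :: real
  defines "\<pi> \<equiv> density P (\<lambda>z. ennreal (exp (\<phi> z - c z)))"
    and "\<pi>' \<equiv> density P (\<lambda>z. ennreal (exp (\<phi>' z - c z)))"
    and "R \<equiv> density P (\<lambda>z. ennreal (exp (- c z) / \<xi>))"
  assumes "sigma_finite_measure P" "prob_space \<pi>" "prob_space \<pi>'" "0 < \<xi>"
    and [measurable]: "c \<in> borel_measurable P"
    and meas_\<phi> [measurable]: "\<phi> \<in> borel_measurable P"
    and meas_\<phi>' [measurable]: "\<phi>' \<in> borel_measurable P"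
    and int_\<pi>: "integrable \<pi> \<phi>'" and int_\<pi>': "integrable \<pi>' \<phi>'"
  shows "rel_entropy \<pi>' R = ereal ((\<integral>z. \<phi>' z \<partial>\<pi>') + ln \<xi>)"
    and "rel_entropy \<pi> R - rel_entropy \<pi>' R
      \<le> rel_entropy \<pi> \<pi>' + ereal ((\<integral>z. \<phi>' z \<partial>\<pi>) - (\<integral>z. \<phi>' z \<partial>\<pi>'))"
proof -
  interpret \<pi>: prob_space \<pi> by fact
  interpret \<pi>': prob_space \<pi>' by fact
  have "R = density P (\<lambda>z. ennreal (exp (- c z - ln \<xi>)))"
    using \<open>0 < \<xi>\<close> by (simp add: R_def exp_diff)
  then have ent_R: "rel_entropy (density P (\<lambda>z. ennreal (exp (\<theta> z - c z)))) R
      = (if integrable (density P (\<lambda>z. ennreal (exp (\<theta> z - c z)))) (\<lambda>z. \<theta> z + ln \<xi>)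
         then ereal (\<integral>z. \<theta> z + ln \<xi> \<partial>density P (\<lambda>z. ennreal (exp (\<theta> z - c z)))) else \<infinity>)"
    if [measurable]: "\<theta> \<in> borel_measurable P" for \<theta>
    using rel_entropy_density_exp[OF \<open>sigma_finite_measure P\<close>, of "\<lambda>z. \<theta> z - c z" "\<lambda>z. - c z - ln \<xi>"]
    by simp
  have ent_\<pi>\<pi>': "rel_entropy \<pi> \<pi>'
      = (if integrable \<pi> (\<lambda>z. \<phi> z - \<phi>' z) then ereal (\<integral>z. \<phi> z - \<phi>' z \<partial>\<pi>) else \<infinity>)"
    using rel_entropy_density_exp[OF \<open>sigma_finite_measure P\<close>, of "\<lambda>z. \<phi> z - c z" "\<lambda>z. \<phi>' z - c z"]
    by (simp add: \<pi>_def \<pi>'_def)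
  show ent_\<pi>'R: "rel_entropy \<pi>' R = ereal ((\<integral>z. \<phi>' z \<partial>\<pi>') + ln \<xi>)"
    using ent_R[OF meas_\<phi>', folded \<pi>'_def] int_\<pi>' by (simp add: \<pi>'.prob_space)
  show "rel_entropy \<pi> R - rel_entropy \<pi>' R
      \<le> rel_entropy \<pi> \<pi>' + ereal ((\<integral>z. \<phi>' z \<partial>\<pi>) - (\<integral>z. \<phi>' z \<partial>\<pi>'))"
  proof (cases "integrable \<pi> \<phi>")
    case True
    then show ?thesis
      using ent_R[OF meas_\<phi>, folded \<pi>_def] ent_\<pi>\<pi>' ent_\<pi>'R int_\<pi> by (simp add: \<pi>.prob_space)
  next
    case False
    then have "\<not> integrable \<pi> (\<lambda>z. \<phi> z + ln \<xi>)" and "\<not> integrable \<pi> (\<lambda>z. \<phi> z - \<phi>' z)"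
      using Bochner_Integration.integrable_diff[of \<pi> "\<lambda>z. \<phi> z + ln \<xi>" "\<lambda>_. ln \<xi>"]
        Bochner_Integration.integrable_add[OF _ int_\<pi>, of "\<lambda>z. \<phi> z - \<phi>' z"] by auto
    then show ?thesis
      using ent_R[OF meas_\<phi>, folded \<pi>_def] ent_\<pi>\<pi>' ent_\<pi>'R by simp
  qed
qed

lemma integrable_max_zero_density_exp:
  fixes P :: "'a measure" and s t u :: "'a \<Rightarrow> real"
  assumes [measurable]: "s \<in> borel_measurable P" "t \<in> borel_measurable P" "u \<in> borel_measurable P"
    and int_t: "integrable (density P (\<lambda>z. ennreal (exp (s z)))) t"
    and int_exp: "integrable P (\<lambda>z. exp (s z + t z + u z))"
  shows "integrable (density P (\<lambda>z. ennreal (exp (s z)))) (\<lambda>z. max 0 (u z))"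
proof -
  have "integrable P (\<lambda>z. exp (s z) * t z)"
    using int_t by (simp add: integrable_density)
  then have "integrable P (\<lambda>z. exp (s z) * \<bar>t z\<bar>)"
    using integrable_abs by (fastforce simp: abs_mult)
  then have int_bound: "integrable P (\<lambda>z. exp (s z + t z + u z) + exp (s z) * \<bar>t z\<bar>)"
    using int_exp by simp
  have "exp (s z) * max 0 (u z) \<le> exp (s z + t z + u z) + exp (s z) * \<bar>t z\<bar>" for z
    using mult_left_mono[OF max_zero_le_exp_add_abs[where t="t z" and u="u z"], of "exp (s z)"]
    by (simp add: distrib_left exp_add[symmetric] add.assoc)
  then have "integrable P (\<lambda>z. exp (s z) * max 0 (u z))"
    by (intro Bochner_Integration.integrable_bound[OF int_bound] AE_I2) auto
  then show ?thesis by (simp add: integrable_density)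
qed

lemma integrable_snd_potential:
  fixes \<mu> \<mu>' :: "'a measure" and \<nu> :: "'b measure" and c :: "'a \<times> 'b \<Rightarrow> real"
    and f f' :: "'a \<Rightarrow> real" and g g' :: "'b \<Rightarrow> real"
  defines "\<pi> \<equiv> density (\<mu> \<Otimes>\<^sub>M \<nu>) (\<lambda>z. ennreal (exp (f (fst z) + g (snd z) - c z)))"
    and "\<pi>' \<equiv> density (\<mu> \<Otimes>\<^sub>M \<nu>) (\<lambda>z. ennreal (exp (f' (fst z) + g' (snd z) - c z)))"
  assumes sets: "sets \<mu>' = sets \<mu>"
    and [measurable]: "c \<in> borel_measurable (\<mu> \<Otimes>\<^sub>M \<nu>)"
      "f \<in> borel_measurable \<mu>" "f' \<in> borel_measurable \<mu>"
      "g \<in> borel_measurable \<nu>" "g' \<in> borel_measurable \<nu>"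
    and int_c: "integrable (\<mu> \<Otimes>\<^sub>M \<nu>) (\<lambda>z. exp (- c z))"
    and \<pi>: "\<pi> \<in> couplings \<mu> \<nu>" and \<pi>': "\<pi>' \<in> couplings \<mu>' \<nu>"
    and "integrable \<mu> f" "integrable \<mu> f'" "integrable \<mu>' f'" "integrable \<nu> g"
  shows "integrable \<nu> g'"
proof -
  have [measurable]: "f' \<in> borel_measurable \<mu>'"
    by (subst measurable_cong_sets[OF sets refl]) simp
  have "integrable \<pi>' (\<lambda>_. 1::real)"
    using \<pi>' by (intro finite_measure.integrable_const prob_space.finite_measure) (simp add: couplings_def)
  then have "integrable (\<mu> \<Otimes>\<^sub>M \<nu>) (\<lambda>z. exp (f' (fst z) + g' (snd z) - c z))"
    by (simp add: \<pi>'_def integrable_density)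
  moreover have "integrable \<pi> (\<lambda>z. f' (fst z) - f (fst z))"
    using coupling_fst(1)[OF \<pi>, of "\<lambda>x. f' x - f x"] \<open>integrable \<mu> f\<close> \<open>integrable \<mu> f'\<close> by simp
  ultimately have "integrable \<pi> (\<lambda>z. max 0 (g' (snd z) - g (snd z)))"
    using integrable_max_zero_density_exp[where P="\<mu> \<Otimes>\<^sub>M \<nu>"
        and s="\<lambda>z. f (fst z) + g (snd z) - c z" and t="\<lambda>z. f' (fst z) - f (fst z)" and u="\<lambda>z. g' (snd z) - g (snd z)", folded \<pi>_def]
    by (simp add: algebra_simps)
  then have pos: "integrable \<nu> (\<lambda>y. max 0 (g' y - g y))"
    using coupling_snd(1)[OF \<pi>, of "\<lambda>y. max 0 (g' y - g y)"] by simp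
  have "integrable \<pi>' (\<lambda>z. - f' (fst z))"
    using coupling_fst(1)[OF \<pi>', of "\<lambda>x. - f' x"] \<open>integrable \<mu>' f'\<close> by simp
  then have "integrable \<pi>' (\<lambda>z. max 0 (- g' (snd z)))"
    using int_c integrable_max_zero_density_exp[where P="\<mu> \<Otimes>\<^sub>M \<nu>"
        and s="\<lambda>z. f' (fst z) + g' (snd z) - c z" and t="\<lambda>z. - f' (fst z)" and u="\<lambda>z. - g' (snd z)", folded \<pi>'_def]
    by simp
  then have neg: "integrable \<nu> (\<lambda>y. max 0 (- g' y))"
    using coupling_snd(1)[OF \<pi>', of "\<lambda>y. max 0 (- g' y)"] by simp
  show ?thesis
    by (rule Bochner_Integration.integrable_bound[where f="\<lambda>y. max 0 (g' y - g y) + \<bar>g y\<bar> + max 0 (- g' y)"])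
      (use pos neg \<open>integrable \<nu> g\<close> in auto)
qed

lemma rel_entropy_coupling_diff:
  fixes \<mu> \<mu>' :: "'a measure" and \<nu> \<nu>' :: "'b measure" and c :: "'a \<times> 'b \<Rightarrow> real"
    and f f' :: "'a \<Rightarrow> real" and g g' :: "'b \<Rightarrow> real"
    and \<pi> \<pi>' R :: "('a \<times> 'b) measure" and \<xi> :: real
  assumes "prob_space \<mu>" "prob_space \<nu>" and sets: "sets \<mu>' = sets \<mu>" "sets \<nu>' = sets \<nu>"
    and [measurable]: "c \<in> borel_measurable (\<mu> \<Otimes>\<^sub>M \<nu>)"
      "f \<in> borel_measurable \<mu>" "f' \<in> borel_measurable \<mu>"
      "g \<in> borel_measurable \<nu>" "g' \<in> borel_measurable \<nu>"
    and int_c: "integrable (\<mu> \<Otimes>\<^sub>M \<nu>) (\<lambda>z. exp (- c z))"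
    and \<xi>_def: "\<xi> = (\<integral>z. exp (- c z) \<partial>(\<mu> \<Otimes>\<^sub>M \<nu>))"
    and R_def: "R = density (\<mu> \<Otimes>\<^sub>M \<nu>) (\<lambda>z. ennreal (exp (- c z) / \<xi>))"
    and \<pi>_def: "\<pi> = density (\<mu> \<Otimes>\<^sub>M \<nu>) (\<lambda>z. ennreal (exp (f (fst z) + g (snd z) - c z)))"
    and \<pi>'_def: "\<pi>' = density (\<mu> \<Otimes>\<^sub>M \<nu>) (\<lambda>z. ennreal (exp (f' (fst z) + g' (snd z) - c z)))"
    and \<pi>: "\<pi> \<in> couplings \<mu> \<nu>" and \<pi>': "\<pi>' \<in> couplings \<mu>' \<nu>'"
    and int_f': "integrable \<mu> f'" "integrable \<mu>' f'"
    and int_g': "integrable \<nu> g'" "integrable \<nu>' g'"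
  shows "rel_entropy \<pi>' R < \<infinity>"
    and "rel_entropy \<pi> R - rel_entropy \<pi>' R \<le> rel_entropy \<pi> \<pi>'
      + ereal (((\<integral>x. f' x \<partial>\<mu>) - (\<integral>x. f' x \<partial>\<mu>')) + ((\<integral>y. g' y \<partial>\<nu>) - (\<integral>y. g' y \<partial>\<nu>')))"
proof -
  interpret \<mu>: prob_space \<mu> by fact
  interpret \<nu>: prob_space \<nu> by fact
  interpret pair_prob_space \<mu> \<nu> ..
  have [measurable]: "f' \<in> borel_measurable \<mu>'" "g' \<in> borel_measurable \<nu>'"
    by (subst measurable_cong_sets[OF sets(1) refl] measurable_cong_sets[OF sets(2) refl], simp)+
  have "0 < \<xi>"
    unfolding \<xi>_def using int_c by (intro P.expectation_greater) auto
  have sf: "sigma_finite_measure (\<mu> \<Otimes>\<^sub>M \<nu>)" by (rule P.sigma_finite_measure_axioms)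
  have prob: "prob_space \<pi>" "prob_space \<pi>'" using \<pi> \<pi>' by (simp_all add: couplings_def)
  have meas: "c \<in> borel_measurable (\<mu> \<Otimes>\<^sub>M \<nu>)"
    "(\<lambda>z. f (fst z) + g (snd z)) \<in> borel_measurable (\<mu> \<Otimes>\<^sub>M \<nu>)"
    "(\<lambda>z. f' (fst z) + g' (snd z)) \<in> borel_measurable (\<mu> \<Otimes>\<^sub>M \<nu>)"
    by measurable
  have integrable_\<pi>: "integrable \<pi> (\<lambda>z. f' (fst z) + g' (snd z))"
    and int_\<pi>: "(\<integral>z. f' (fst z) + g' (snd z) \<partial>\<pi>) = (\<integral>x. f' x \<partial>\<mu>) + (\<integral>y. g' y \<partial>\<nu>)"
    using coupling_fst[OF \<pi>, of f'] coupling_snd[OF \<pi>, of g'] int_f'(1) int_g'(1) by simp_all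
  have integrable_\<pi>': "integrable \<pi>' (\<lambda>z. f' (fst z) + g' (snd z))"
    and int_\<pi>': "(\<integral>z. f' (fst z) + g' (snd z) \<partial>\<pi>') = (\<integral>x. f' x \<partial>\<mu>') + (\<integral>y. g' y \<partial>\<nu>')"
    using coupling_fst[OF \<pi>', of f'] coupling_snd[OF \<pi>', of g'] int_f'(2) int_g'(2) by simp_all
  note tilted = rel_entropy_tilted_diff[where P="\<mu> \<Otimes>\<^sub>M \<nu>" and c=c and \<xi>=\<xi>
      and \<phi>="\<lambda>z. f (fst z) + g (snd z)" and \<phi>'="\<lambda>z. f' (fst z) + g' (snd z)",
      folded \<pi>_def \<pi>'_def R_def, OF sf prob \<open>0 < \<xi>\<close> meas integrable_\<pi> integrable_\<pi>']
  show "rel_entropy \<pi>' R < \<infinity>"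
    using tilted(1) by simp
  show "rel_entropy \<pi> R - rel_entropy \<pi>' R \<le> rel_entropy \<pi> \<pi>'
      + ereal (((\<integral>x. f' x \<partial>\<mu>) - (\<integral>x. f' x \<partial>\<mu>')) + ((\<integral>y. g' y \<partial>\<nu>) - (\<integral>y. g' y \<partial>\<nu>')))"
    using tilted(2) by (simp add: int_\<pi> int_\<pi>' algebra_simps)
qed

theorem lemma3p5:
  fixes \<mu> \<mu>' :: "'a::polish_space measure" and \<nu> \<nu>' :: "'b::polish_space measure"
    and c :: "'a \<times> 'b \<Rightarrow> real"
    and f f' :: "'a \<Rightarrow> real" and g g' :: "'b \<Rightarrow> real"
    and \<pi> \<pi>' R :: "('a \<times> 'b) measure" and \<xi> :: real
  assumes \<mu>: "prob_space \<mu>" "sets \<mu> = sets borel"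
    and \<mu>': "prob_space \<mu>'" "sets \<mu>' = sets borel"
    and \<nu>: "prob_space \<nu>" "sets \<nu> = sets borel"
    and \<nu>': "prob_space \<nu>'" "sets \<nu>' = sets borel"
    and c_meas: "c \<in> borel_measurable (\<mu> \<Otimes>\<^sub>M \<nu>)"
    and c_int: "integrable (\<mu> \<Otimes>\<^sub>M \<nu>) (\<lambda>z. exp (- c z))"
    and \<xi>_def: "\<xi> = (\<integral>z. exp (- c z) \<partial>(\<mu> \<Otimes>\<^sub>M \<nu>))"
    and R_def: "R = density (\<mu> \<Otimes>\<^sub>M \<nu>) (\<lambda>z. ennreal (exp (- c z) / \<xi>))"
    and H\<mu>: "rel_entropy \<mu>' \<mu> < \<infinity>"
    and H\<nu>: "rel_entropy \<nu>' \<nu> < \<infinity>"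
    and f_meas: "f \<in> borel_measurable \<mu>" and f'_meas: "f' \<in> borel_measurable \<mu>"
    and g_meas: "g \<in> borel_measurable \<nu>" and g'_meas: "g' \<in> borel_measurable \<nu>"
    and C1: "tildeC \<mu> f' < \<infinity>"
    and \<pi>_coup: "\<pi> \<in> couplings \<mu> \<nu>"
    and \<pi>'_coup: "\<pi>' \<in> couplings \<mu>' \<nu>'"
    and \<pi>_def: "\<pi> = density (\<mu> \<Otimes>\<^sub>M \<nu>) (\<lambda>z. ennreal (exp (f (fst z) + g (snd z) - c z)))"
    and \<pi>'_def: "\<pi>' = density (\<mu> \<Otimes>\<^sub>M \<nu>) (\<lambda>z. ennreal (exp (f' (fst z) + g' (snd z) - c z)))"
  shows
    "(tildeC \<nu> g' < \<infinity> \<longrightarrow>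
        rel_entropy \<pi>' R < \<infinity> \<and>
        rel_entropy \<pi> R - rel_entropy \<pi>' R
          \<le> rel_entropy \<pi> \<pi>'
             + tildeC \<mu> f' * ereal (sqrt (real_of_ereal (rel_entropy \<mu>' \<mu>))
                                    + real_of_ereal (rel_entropy \<mu>' \<mu>) / 2)
             + tildeC \<nu> g' * ereal (sqrt (real_of_ereal (rel_entropy \<nu>' \<nu>))
                                    + real_of_ereal (rel_entropy \<nu>' \<nu>) / 2))
     \<and> (\<nu>' = \<nu> \<and> integrable \<mu> f \<and> integrable \<nu> g \<longrightarrow>
        rel_entropy \<pi>' R < \<infinity> \<and>
        rel_entropy \<pi> R - rel_entropy \<pi>' R
          \<le> rel_entropy \<pi> \<pi>'
             + tildeC \<mu> f' * ereal (sqrt (real_of_ereal (rel_entropy \<mu>' \<mu>))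
                                    + real_of_ereal (rel_entropy \<mu>' \<mu>) / 2))"
proof -
  have sets: "sets \<mu>' = sets \<mu>" "sets \<nu>' = sets \<nu>" using \<mu> \<mu>' \<nu> \<nu>' by simp_all
  note entropy_diff = rel_entropy_coupling_diff[OF \<mu>(1) \<nu>(1) sets c_meas f_meas f'_meas g_meas g'_meas
      c_int \<xi>_def R_def \<pi>_def \<pi>'_def \<pi>_coup \<pi>'_coup]
  note bound_\<mu> = integral_diff_le_tildeC_rel_entropy[OF \<mu>(1) \<mu>'(1) sets(1) H\<mu> f'_meas C1]
  show ?thesis
  proof (intro conjI impI)
    assume C2: "tildeC \<nu> g' < \<infinity>"
    note bound_\<nu> = integral_diff_le_tildeC_rel_entropy[OF \<nu>(1) \<nu>'(1) sets(2) H\<nu> g'_meas C2]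
    note diff = entropy_diff[OF bound_\<mu>(1,2) bound_\<nu>(1,2)]
    then show "rel_entropy \<pi>' R < \<infinity>" by simp
    show "rel_entropy \<pi> R - rel_entropy \<pi>' R \<le> rel_entropy \<pi> \<pi>'
        + tildeC \<mu> f' * ereal (sqrt (real_of_ereal (rel_entropy \<mu>' \<mu>)) + real_of_ereal (rel_entropy \<mu>' \<mu>) / 2)
        + tildeC \<nu> g' * ereal (sqrt (real_of_ereal (rel_entropy \<nu>' \<nu>)) + real_of_ereal (rel_entropy \<nu>' \<nu>) / 2)"
      using diff(2) add_mono[OF bound_\<mu>(3) bound_\<nu>(3)]
      by (simp add: add.assoc) (meson add_left_mono order_trans)
  next
    assume "\<nu>' = \<nu> \<and> integrable \<mu> f \<and> integrable \<nu> g"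
    then have \<nu>'_eq: "\<nu>' = \<nu>" and "integrable \<mu> f" "integrable \<nu> g" by simp_all
    have "integrable \<nu> g'"
      using integrable_snd_potential[OF sets(1) c_meas f_meas f'_meas g_meas g'_meas c_int]
        \<pi>_coup \<pi>'_coup bound_\<mu>(1,2) \<open>integrable \<mu> f\<close> \<open>integrable \<nu> g\<close>
      by (simp add: \<pi>_def \<pi>'_def \<nu>'_eq)
    note diff = entropy_diff[OF bound_\<mu>(1,2) this this[folded \<nu>'_eq]]
    then show "rel_entropy \<pi>' R < \<infinity>" by simp
    show "rel_entropy \<pi> R - rel_entropy \<pi>' R \<le> rel_entropy \<pi> \<pi>'
        + tildeC \<mu> f' * ereal (sqrt (real_of_ereal (rel_entropy \<mu>' \<mu>)) + real_of_ereal (rel_entropy \<mu>' \<mu>) / 2)"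
      using diff(2) bound_\<mu>(3) by (simp add: \<nu>'_eq) (meson add_left_mono order_trans)
  qed
qed

end
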